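(* Let $(S,\mathcal F,\mathcal L)$ be a $p$-local finite group and let $V\le Z(S)$ be an $\mathcal F$-weakly closed subgroup such that $\mathrm{Aut}_{\mathcal F}(V)$ is a $p$-group. Then $V$ is central in $(S,\mathcal F,\mathcal L)$, that is, $(S,\mathcal F,\mathcal L)=(C_S(V),C_{\mathcal F}(V),C_{\mathcal L}(V))$; in particular $\mathcal F=C_{\mathcal F}(V)$.
   Context: A subgroup of $S$ is $\mathcal F$-weakly closed if no other subgroup of $S$ is $\mathcal F$-conjugate to it. For $Q\le S$, the centralizer fusion system $C_{\mathcal F}(Q)$ is the fusion system over $C_S(Q)$ with $\mathrm{Hom}_{C_{\mathcal F}(Q)}(P,P')=\{\phi\in\mathrm{Hom}_{\mathcal F}(P,P')\mid\exists\psi\in\mathrm{Hom}_{\mathcal F}(PQ,P'Q),\ \psi|_P=\phi,\ \psi|_Q=\mathrm{id}\}$. For $V\le Z(S)$ (so $C_S(V)=S$), $C_{\mathcal L}(V)$ denotes the subcategory of $\mathcal L$ with $\mathrm{Mor}_{C_{\mathcal L}(V)}(P,Q)=\pi^{-1}(\mathrm{Hom}_{C_{\mathcal F}(V)}(P,Q))$ for $\mathcal F$-centric $P,Q$. Let $p$ be a prime and $S$ a finite $p$-group. For $P,Q\le S$, $\mathrm{Hom}_S(P,Q)$ is the set of maps $c_g\colon x\mapsto gxg^{-1}$ with $g\in S$, $gPg^{-1}\le Q$, and $\mathrm{Aut}_S(P)=\mathrm{Hom}_S(P,P)$. A fusion system $\mathcal F$ over $S$ is a category whose objects are the subgroups of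 $S$, with $\mathrm{Hom}_S(P,Q)\subseteq\mathrm{Hom}_{\mathcal F}(P,Q)\subseteq \mathrm{Inj}(P,Q)$, such that every morphism factors as an $\mathcal F$-isomorphism followed by an inclusion. Subgroups are $\mathcal F$-conjugate if they are isomorphic in $\mathcal F$. $P$ is fully centralized (resp. fully normalized) if $|C_S(P)|\ge |C_S(P')|$ (resp. $|N_S(P)|\ge|N_S(P')|$) for all $P'$ $\mathcal F$-conjugate to $P$. $\mathcal F$ is saturated if (I) every fully normalized $P$ is fully centralized and $\mathrm{Aut}_S(P)$ is a Sylow $p$-subgroup of $\mathrm{Aut}_{\mathcal F}(P)$, and (II) whenever $\phi\in\mathrm{Hom}_{\mathcal F}(P,S)$ with $\phi(P)$ fully centralized, $\phi$ extends to a morphism in $\mathcal F$ defined on $N_\phi=\{g\in N_S(P):\phi c_g\phi^{-1}\in \mathrm{Aut}_S(\phi(P))\}$. $P$ is $\mathcal F$-centric if $C_S(P')\le P'$ for all $P'$ $\mathcal F$-conjugate to $P$; $\mathcal F^c$ is the full subcategory on these. A centric linking system associated to $\mathcal F$ is a category $\mathcal L$ with objects the $\mathcal F$-centric subgroups, a functor $\pi\colon\mathcal L\to\mathcal F^c$ which is the identity on objects, and monomorphisms $\delta_P\colon P\to\mathrm{Aut}_{\mathcal L}(P)$, such that (A) $Z(P)$ (via $\delta_P$) acts freely on $\mathrm{Mor}_{\mathcal L}(P,Q)$ by composition and $\pi$ induces a bijection $\mathrm{Mor}_{\mathcal L}(P,Q)/Z(P)\to\mathrm{Hom}_{\mathcal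 F}(P,Q)$; (B) $\pi(\delta_P(g))=c_g$ for $g\in P$; (C) $f\circ\delta_P(g)=\delta_Q(\pi(f)(g))\circ f$ for $f\in\mathrm{Mor}_{\mathcal L}(P,Q)$, $g\in P$. A $p$-local finite group is a triple $(S,\mathcal F,\mathcal L)$ with $\mathcal F$ a saturated fusion system over $S$ and $\mathcal L$ an associated centric linking system. *)

theory Defs
  imports "HOL-Algebra.Group_Action" "HOL-Computational_Algebra.Primes"
begin

text \<open>Morphisms between subgroups P, Q of S are functions 'a => 'a which are extensional
on their domain P (i.e. identified with their restriction to P).\<close>

definition conjm :: "('a, 'b) monoid_scheme \<Rightarrow> 'a \<Rightarrow> 'a \<Rightarrow> 'a" where
  "conjm S g = (\<lambda>x. g \<otimes>\<^bsub>S\<^esub> x \<otimes>\<^bsub>S\<^esub> inv\<^bsub>S\<^esub> g)"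

definition HomS :: "('a, 'b) monoid_scheme \<Rightarrow> 'a set \<Rightarrow> 'a set \<Rightarrow> ('a \<Rightarrow> 'a) set" where
  "HomS S P Q = {restrict (conjm S g) P | g. g \<in> carrier S \<and> conjm S g ` P \<subseteq> Q}"

definition InjHom :: "('a, 'b) monoid_scheme \<Rightarrow> 'a set \<Rightarrow> 'a set \<Rightarrow> ('a \<Rightarrow> 'a) set" where
  "InjHom S P Q = {\<phi>. \<phi> \<in> extensional P \<and> \<phi> ` P \<subseteq> Q \<and> inj_on \<phi> P \<and>
      (\<forall>x\<in>P. \<forall>y\<in>P. \<phi> (x \<otimes>\<^bsub>S\<^esub> y) = \<phi> x \<otimes>\<^bsub>S\<^esub> \<phi> y)}"

definition finite_p_group :: "nat \<Rightarrow> ('a, 'b) monoid_scheme \<Rightarrow> bool" where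
  "finite_p_group p S \<longleftrightarrow> prime p \<and> group S \<and> finite (carrier S) \<and>
      (\<exists>n. card (carrier S) = p ^ n)"

text \<open>A fusion system over S: Hom_F(P,Q) = F P Q for subgroups P, Q of S.\<close>
definition fusion_system :: "('a, 'b) monoid_scheme \<Rightarrow> ('a set \<Rightarrow> 'a set \<Rightarrow> ('a \<Rightarrow> 'a) set) \<Rightarrow> bool" where
  "fusion_system S F \<longleftrightarrow>
     (\<forall>P Q. subgroup P S \<longrightarrow> subgroup Q S \<longrightarrow> HomS S P Q \<subseteq> F P Q \<and> F P Q \<subseteq> InjHom S P Q)
   \<and> (\<forall>P Q R \<phi> \<psi>. subgroup P S \<longrightarrow> subgroup Q S \<longrightarrow> subgroup R S \<longrightarrow>
        \<phi> \<in> F P Q \<longrightarrow> \<psi> \<in> F Q R \<longrightarrow> restrict (\<psi> \<circ> \<phi>) P \<in> F P R)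
   \<and> (\<forall>P Q \<phi>. subgroup P S \<longrightarrow> subgroup Q S \<longrightarrow> \<phi> \<in> F P Q \<longrightarrow>
        \<phi> \<in> F P (\<phi> ` P) \<and> restrict (inv_into P \<phi>) (\<phi> ` P) \<in> F (\<phi> ` P) P)"

definition F_conj :: "('a, 'b) monoid_scheme \<Rightarrow> ('a set \<Rightarrow> 'a set \<Rightarrow> ('a \<Rightarrow> 'a) set) \<Rightarrow> 'a set \<Rightarrow> 'a set \<Rightarrow> bool" where
  "F_conj S F P P' \<longleftrightarrow> subgroup P S \<and> subgroup P' S \<and>
     (\<exists>\<phi>\<in>F P P'. \<phi> ` P = P' \<and> restrict (inv_into P \<phi>) P' \<in> F P' P)"

definition centralizerS :: "('a, 'b) monoid_scheme \<Rightarrow> 'a set \<Rightarrow> 'a set" where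
  "centralizerS S P = {g \<in> carrier S. \<forall>x\<in>P. g \<otimes>\<^bsub>S\<^esub> x = x \<otimes>\<^bsub>S\<^esub> g}"

definition centerS :: "('a, 'b) monoid_scheme \<Rightarrow> 'a set \<Rightarrow> 'a set" where
  "centerS S P = {z \<in> P. \<forall>x\<in>P. z \<otimes>\<^bsub>S\<^esub> x = x \<otimes>\<^bsub>S\<^esub> z}"

definition fully_centralized where
  "fully_centralized S F P \<longleftrightarrow> (\<forall>P'. F_conj S F P P' \<longrightarrow> card (centralizerS S P') \<le> card (centralizerS S P))"

definition fully_normalized where
  "fully_normalized S F P \<longleftrightarrow> (\<forall>P'. F_conj S F P P' \<longrightarrow> card (normalizer S P') \<le> card (normalizer S P))"

definition sylow_subset :: "nat \<Rightarrow> 'c set \<Rightarrow> 'c set \<Rightarrow> bool" where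
  "sylow_subset p H K \<longleftrightarrow> H \<subseteq> K \<and> (\<exists>n. card H = p ^ n) \<and> card H dvd card K \<and>
      \<not> p dvd (card K div card H)"

definition N_phi where
  "N_phi S F P \<phi> = {g \<in> normalizer S P.
      restrict (\<phi> \<circ> conjm S g \<circ> inv_into P \<phi>) (\<phi> ` P) \<in> HomS S (\<phi> ` P) (\<phi> ` P)}"

definition saturated_fusion_system where
  "saturated_fusion_system p S F \<longleftrightarrow> finite_p_group p S \<and> fusion_system S F
   \<and> (\<forall>P. subgroup P S \<longrightarrow> fully_normalized S F P \<longrightarrow>
        fully_centralized S F P \<and> sylow_subset p (HomS S P P) (F P P))
   \<and> (\<forall>P \<phi>. subgroup P S \<longrightarrow> \<phi> \<in> F P (carrier S) \<longrightarrow> fully_centralized S F (\<phi> ` P) \<longrightarrow>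
        (\<exists>\<psi> \<in> F (N_phi S F P \<phi>) (carrier S). \<forall>x\<in>P. \<psi> x = \<phi> x))"

definition F_centric where
  "F_centric S F P \<longleftrightarrow> subgroup P S \<and> (\<forall>P'. F_conj S F P P' \<longrightarrow> centralizerS S P' \<subseteq> P')"

text \<open>A category L with objects the F-centric subgroups: morphism sets, composition
(comp f g = f after g), identities, the functor pi (on morphisms P -> Q) and delta_P.\<close>
record ('a, 'm) linking =
  Mor :: "'a set \<Rightarrow> 'a set \<Rightarrow> 'm set"
  comp :: "'m \<Rightarrow> 'm \<Rightarrow> 'm"
  ident :: "'a set \<Rightarrow> 'm"
  proj :: "'a set \<Rightarrow> 'a set \<Rightarrow> 'm \<Rightarrow> ('a \<Rightarrow> 'a)"
  delta :: "'a set \<Rightarrow> 'a \<Rightarrow> 'm"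

definition centric_linking_system where
  "centric_linking_system S F L \<longleftrightarrow>
   (let C = F_centric S F in
   \<comment> \<open>category\<close>
     (\<forall>P Q R f g. C P \<longrightarrow> C Q \<longrightarrow> C R \<longrightarrow> g \<in> Mor L P Q \<longrightarrow> f \<in> Mor L Q R \<longrightarrow>
        comp L f g \<in> Mor L P R)
   \<and> (\<forall>P Q R T f g h. C P \<longrightarrow> C Q \<longrightarrow> C R \<longrightarrow> C T \<longrightarrow> h \<in> Mor L P Q \<longrightarrow> g \<in> Mor L Q R \<longrightarrow>
        f \<in> Mor L R T \<longrightarrow> comp L f (comp L g h) = comp L (comp L f g) h)
   \<and> (\<forall>P. C P \<longrightarrow> ident L P \<in> Mor L P P)
   \<and> (\<forall>P Q f. C P \<longrightarrow> C Q \<longrightarrow> f \<in> Mor L P Q \<longrightarrow>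
        comp L (ident L Q) f = f \<and> comp L f (ident L P) = f)
   \<comment> \<open>functor pi to F^c, identity on objects\<close>
   \<and> (\<forall>P Q f. C P \<longrightarrow> C Q \<longrightarrow> f \<in> Mor L P Q \<longrightarrow> proj L P Q f \<in> F P Q)
   \<and> (\<forall>P. C P \<longrightarrow> proj L P P (ident L P) = restrict id P)
   \<and> (\<forall>P Q R f g. C P \<longrightarrow> C Q \<longrightarrow> C R \<longrightarrow> g \<in> Mor L P Q \<longrightarrow> f \<in> Mor L Q R \<longrightarrow>
        proj L P R (comp L f g) = restrict (proj L Q R f \<circ> proj L P Q g) P)
   \<comment> \<open>delta_P : P -> Aut_L(P) injective homomorphism\<close>
   \<and> (\<forall>P. C P \<longrightarrow> (\<forall>g\<in>P. delta L P g \<in> Mor L P P) \<and> inj_on (delta L P) P \<and>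
        (\<forall>g\<in>P. \<forall>h\<in>P. delta L P (g \<otimes>\<^bsub>S\<^esub> h) = comp L (delta L P g) (delta L P h)))
   \<comment> \<open>(A)\<close>
   \<and> (\<forall>P Q. C P \<longrightarrow> C Q \<longrightarrow>
        (\<forall>f\<in>Mor L P Q. \<forall>z\<in>centerS S P. comp L f (delta L P z) = f \<longrightarrow> z = \<one>\<^bsub>S\<^esub>)
      \<and> proj L P Q ` Mor L P Q = F P Q
      \<and> (\<forall>f\<in>Mor L P Q. \<forall>f'\<in>Mor L P Q. proj L P Q f = proj L P Q f' \<longleftrightarrow>
            (\<exists>z\<in>centerS S P. f' = comp L f (delta L P z))))
   \<comment> \<open>(B)\<close>
   \<and> (\<forall>P g. C P \<longrightarrow> g \<in> P \<longrightarrow> proj L P P (delta L P g) = restrict (conjm S g) P)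
   \<comment> \<open>(C)\<close>
   \<and> (\<forall>P Q f g. C P \<longrightarrow> C Q \<longrightarrow> f \<in> Mor L P Q \<longrightarrow> g \<in> P \<longrightarrow>
        comp L f (delta L P g) = comp L (delta L Q (proj L P Q f g)) f))"

definition p_local_finite_group where
  "p_local_finite_group p S F L \<longleftrightarrow> saturated_fusion_system p S F \<and> centric_linking_system S F L"

definition F_weakly_closed where
  "F_weakly_closed S F V \<longleftrightarrow> subgroup V S \<and> (\<forall>V'. F_conj S F V V' \<longrightarrow> V' = V)"

definition CF :: "('a, 'b) monoid_scheme \<Rightarrow> ('a set \<Rightarrow> 'a set \<Rightarrow> ('a \<Rightarrow> 'a) set) \<Rightarrow> 'a set
    \<Rightarrow> 'a set \<Rightarrow> 'a set \<Rightarrow> ('a \<Rightarrow> 'a) set" where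
  "CF S F Q P P' = {\<phi> \<in> F P P'. \<exists>\<psi> \<in> F (P <#>\<^bsub>S\<^esub> Q) (P' <#>\<^bsub>S\<^esub> Q).
       (\<forall>x\<in>P. \<psi> x = \<phi> x) \<and> (\<forall>x\<in>Q. \<psi> x = x)}"

text \<open>Morphism sets of C_L(V) for V central: pi^{-1}(Hom_{C_F(V)}(P,Q)).\<close>
definition CL_Mor where
  "CL_Mor S F L V P Q = {f \<in> Mor L P Q. proj L P Q f \<in> CF S F V P Q}"

end

(* Since V is weakly closed it is fully normalized, so Aut_S(V), which is trivial because V is
   central, is a Sylow p-subgroup of the p-group Aut_F(V); hence Aut_F(V) = 1 and every morphism
   of F defined on a subgroup containing V is the identity on V.  If P' is fully centralized, the
   extension axiom extends any \<alpha> : P \<rightarrow> P' to N_\<alpha>, which contains PV because V is central; the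
   restriction to PV is the identity on V.  An arbitrary \<phi> : P \<rightarrow> Q factors as \<beta>\<^sup>-\<^sup>1 \<alpha> with
   \<alpha> : P \<rightarrow> P' and \<beta> : \<phi>(P) \<rightarrow> P' for a fully centralized F-conjugate P' of P, and the
   extensions of \<alpha> and \<beta> to PV and \<phi>(P)V have the same image P'V, so composing the first with
   the inverse of the second extends \<phi> to PV fixing V.  Thus F = C_F(V), and C_L(V) = L because
   C_L(V) is the full preimage of C_F(V). *)

theory Submission
  imports Defs "HOL-Algebra.SndIsomorphismGrp" "HOL-Algebra.Zassenhaus"
begin

lemma fusion_system_HomS:
  "fusion_system S F \<Longrightarrow> subgroup P S \<Longrightarrow> subgroup Q S \<Longrightarrow> HomS S P Q \<subseteq> F P Q"
  unfolding fusion_system_def by blast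

lemma fusion_system_InjHom:
  "fusion_system S F \<Longrightarrow> subgroup P S \<Longrightarrow> subgroup Q S \<Longrightarrow> F P Q \<subseteq> InjHom S P Q"
  unfolding fusion_system_def by blast

lemma fusion_system_comp:
  "fusion_system S F \<Longrightarrow> subgroup P S \<Longrightarrow> subgroup Q S \<Longrightarrow> subgroup R S \<Longrightarrow>
    \<phi> \<in> F P Q \<Longrightarrow> \<psi> \<in> F Q R \<Longrightarrow> restrict (\<psi> \<circ> \<phi>) P \<in> F P R"
  unfolding fusion_system_def by blast

lemma fusion_system_onto_image:
  "fusion_system S F \<Longrightarrow> subgroup P S \<Longrightarrow> subgroup Q S \<Longrightarrow> \<phi> \<in> F P Q \<Longrightarrow> \<phi> \<in> F P (\<phi> ` P)"
  unfolding fusion_system_def by blast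

lemma fusion_system_inv_into:
  "fusion_system S F \<Longrightarrow> subgroup P S \<Longrightarrow> subgroup Q S \<Longrightarrow> \<phi> \<in> F P Q \<Longrightarrow>
    restrict (inv_into P \<phi>) (\<phi> ` P) \<in> F (\<phi> ` P) P"
  unfolding fusion_system_def by blast

lemma saturated_fusion_systemD:
  assumes "saturated_fusion_system p S F"
  shows "group S" "finite (carrier S)" "fusion_system S F"
    "\<And>P. subgroup P S \<Longrightarrow> fully_normalized S F P \<Longrightarrow> sylow_subset p (HomS S P P) (F P P)"
    "\<And>P \<phi>. subgroup P S \<Longrightarrow> \<phi> \<in> F P (carrier S) \<Longrightarrow> fully_centralized S F (\<phi> ` P) \<Longrightarrow>
       \<exists>\<psi> \<in> F (N_phi S F P \<phi>) (carrier S). \<forall>x\<in>P. \<psi> x = \<phi> x"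
  using assms unfolding saturated_fusion_system_def finite_p_group_def by blast+

lemma restrict_eq_restrict_iff: "restrict f A = restrict g A \<longleftrightarrow> (\<forall>x\<in>A. f x = g x)"
proof
  assume "restrict f A = restrict g A"
  then show "\<forall>x\<in>A. f x = g x" by (metis restrict_apply')
qed (auto intro: restrict_ext)

context group
begin

lemma centerS_conj:
  assumes "z \<in> centerS G (carrier G)" "g \<in> carrier G"
  shows "g \<otimes> z \<otimes> inv g = z"
proof -
  have zc: "z \<in> carrier G" and zg: "z \<otimes> inv g = inv g \<otimes> z"
    using assms by (auto simp: centerS_def)
  have "g \<otimes> z \<otimes> inv g = g \<otimes> (inv g \<otimes> z)"
    using assms(2) zc by (simp add: m_assoc zg)
  also have "\<dots> = z"
    using assms(2) zc by (simp add: m_assoc[symmetric])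
  finally show ?thesis .
qed

lemma centerS_conj_mult:
  assumes "z \<in> centerS G (carrier G)" "g \<in> carrier G" "x \<in> carrier G"
  shows "(g \<otimes> z) \<otimes> x \<otimes> inv (g \<otimes> z) = g \<otimes> x \<otimes> inv g"
proof -
  have zc: "z \<in> carrier G" and zx: "z \<otimes> x = x \<otimes> z" using assms by (auto simp: centerS_def)
  have "(g \<otimes> z) \<otimes> x \<otimes> inv (g \<otimes> z) = g \<otimes> (z \<otimes> x) \<otimes> inv z \<otimes> inv g"
    using assms(2,3) zc by (simp add: inv_mult_group m_assoc)
  also have "\<dots> = g \<otimes> x \<otimes> inv g"
    using assms(2,3) zc by (simp add: zx m_assoc)
  finally show ?thesis .
qed

lemma conj_inv_conj:
  assumes "g \<in> carrier G" "x \<in> carrier G"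
  shows "g \<otimes> (inv g \<otimes> x \<otimes> g) \<otimes> inv g = x"
  using assms by (simp add: m_assoc[symmetric]) (simp add: m_assoc)

lemma conj_mult:
  assumes "g \<in> carrier G" "h \<in> carrier G" "x \<in> carrier G"
  shows "(g \<otimes> h) \<otimes> x \<otimes> inv (g \<otimes> h) = g \<otimes> (h \<otimes> x \<otimes> inv h) \<otimes> inv g"
  using assms by (simp add: inv_mult_group m_assoc)

lemma centerS_normal:
  assumes "subgroup V G" "V \<subseteq> centerS G (carrier G)"
  shows "V \<lhd> G"
  unfolding normal_inv_iff using assms centerS_conj by (auto simp: subset_iff)

lemma set_mult_central_subgroup:
  assumes P: "subgroup P G" and V: "subgroup V G" and Z: "V \<subseteq> centerS G (carrier G)"
  shows "subgroup (P <#> V) G" "P \<subseteq> P <#> V" "V \<subseteq> P <#> V"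
proof -
  interpret second_isomorphism_grp V G P
    by (intro second_isomorphism_grp.intro centerS_normal V Z second_isomorphism_grp_axioms.intro P)
  have "P <#> V = V <#> P" using commut_normal[OF P centerS_normal[OF V Z]] .
  then show "subgroup (P <#> V) G" "P \<subseteq> P <#> V" "V \<subseteq> P <#> V"
    using normal_set_mult_subgroup S_contained_in_set_mult H_contained_in_set_mult by simp_all
qed

lemma HomS_inclusion:
  assumes "P \<subseteq> Q" "Q \<subseteq> carrier G"
  shows "restrict id P \<in> HomS G P Q"
proof -
  have "restrict id P = restrict (conjm G \<one>) P"
    using assms by (intro restrict_ext) (auto simp: conjm_def)
  moreover have "conjm G \<one> ` P \<subseteq> Q"
    using assms by (auto simp: conjm_def subset_iff)
  ultimately show ?thesis unfolding HomS_def by blast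
qed

lemma HomS_central:
  assumes "V \<subseteq> centerS G (carrier G)"
  shows "HomS G V V = {restrict id V}"
proof -
  have VC: "V \<subseteq> carrier G" using assms by (auto simp: centerS_def)
  have "restrict (conjm G g) V = restrict id V" if "g \<in> carrier G" for g
    using assms that centerS_conj by (intro restrict_ext) (auto simp: conjm_def)
  then have "HomS G V V \<subseteq> {restrict id V}" unfolding HomS_def by blast
  then show ?thesis using HomS_inclusion[OF subset_refl VC] by blast
qed

lemma F_InjHomD:
  assumes "fusion_system G F" "subgroup P G" "subgroup Q G" "\<phi> \<in> F P Q"
  shows "\<phi> \<in> extensional P" "\<phi> ` P \<subseteq> Q" "inj_on \<phi> P"
  using fusion_system_InjHom[OF assms(1-3)] assms(4) unfolding InjHom_def by blast+

lemma F_group_hom: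
  assumes "fusion_system G F" "subgroup P G" "subgroup Q G" "\<phi> \<in> F P Q"
  shows "group_hom (G\<lparr>carrier := P\<rparr>) G \<phi>"
proof -
  have "\<phi> \<in> InjHom G P Q" using fusion_system_InjHom[OF assms(1-3)] assms(4) by blast
  then have "\<phi> \<in> hom (G\<lparr>carrier := P\<rparr>) G"
    using subgroup.subset[OF assms(3)] unfolding InjHom_def hom_def by auto
  then show ?thesis
    using subgroup_imp_group[OF assms(2)] is_group by (simp add: group_hom_def group_hom_axioms_def)
qed

lemma F_image_subgroup:
  assumes "fusion_system G F" "subgroup P G" "subgroup Q G" "\<phi> \<in> F P Q"
  shows "subgroup (\<phi> ` P) G"
  using group_hom.img_is_subgroup[OF F_group_hom[OF assms]] by simp

lemma F_mult:
  assumes "fusion_system G F" "subgroup P G" "subgroup Q G" "\<phi> \<in> F P Q" "x \<in> P" "y \<in> P"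
  shows "\<phi> (x \<otimes> y) = \<phi> x \<otimes> \<phi> y"
  using group_hom.hom_mult[OF F_group_hom[OF assms(1-4)]] assms(5,6) by simp

lemma F_inv:
  assumes "fusion_system G F" "subgroup P G" "subgroup Q G" "\<phi> \<in> F P Q" "x \<in> P"
  shows "\<phi> (inv x) = inv (\<phi> x)"
  using group_hom.hom_inv[OF F_group_hom[OF assms(1-4)]] assms(2,5) by simp

lemma F_corestrict:
  assumes fs: "fusion_system G F" and P: "subgroup P G" and Q: "subgroup Q G" and R: "subgroup R G"
    and \<phi>: "\<phi> \<in> F P R" and sub: "\<phi> ` P \<subseteq> Q"
  shows "\<phi> \<in> F P Q"
proof -
  have I: "subgroup (\<phi> ` P) G" using F_image_subgroup[OF fs P R \<phi>] .
  have "restrict id (\<phi> ` P) \<in> F (\<phi> ` P) Q"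
    using fusion_system_HomS[OF fs I Q] HomS_inclusion[OF sub subgroup.subset[OF Q]] by blast
  from fusion_system_comp[OF fs P I Q fusion_system_onto_image[OF fs P R \<phi>] this]
  have "restrict (restrict id (\<phi> ` P) \<circ> \<phi>) P \<in> F P Q" .
  moreover have "restrict (restrict id (\<phi> ` P) \<circ> \<phi>) P = \<phi>"
    using F_InjHomD(1)[OF fs P R \<phi>] by (auto simp: restrict_def extensional_def fun_eq_iff)
  ultimately show ?thesis by simp
qed

lemma F_restrict:
  assumes fs: "fusion_system G F" and P: "subgroup P G" and P': "subgroup P' G" and R: "subgroup R G"
    and sub: "P' \<subseteq> P" and \<phi>: "\<phi> \<in> F P R"
  shows "restrict \<phi> P' \<in> F P' R"
proof -
  have "restrict id P' \<in> F P' P"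
    using fusion_system_HomS[OF fs P' P] HomS_inclusion[OF sub subgroup.subset[OF P]] by blast
  from fusion_system_comp[OF fs P' P R this \<phi>]
  show ?thesis by (simp add: restrict_compose_right[of \<phi> id, simplified])
qed

lemma F_factor_through:
  assumes fs: "fusion_system G F" and A: "subgroup A G" and B: "subgroup B G" and C: "subgroup C G"
    and \<alpha>: "\<alpha> \<in> F A C" and \<beta>: "\<beta> \<in> F B C" and sub: "\<alpha> ` A \<subseteq> \<beta> ` B"
  shows "restrict (inv_into B \<beta> \<circ> \<alpha>) A \<in> F A B"
proof -
  have I: "subgroup (\<beta> ` B) G" using F_image_subgroup[OF fs B C \<beta>] .
  have "\<alpha> \<in> F A (\<beta> ` B)" using F_corestrict[OF fs A I C \<alpha> sub] .
  from fusion_system_comp[OF fs A I B this fusion_system_inv_into[OF fs B C \<beta>]]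
  show ?thesis by (simp only: restrict_compose_left[OF sub])
qed

lemma F_conj_image:
  assumes fs: "fusion_system G F" and P: "subgroup P G" and Q: "subgroup Q G" and \<phi>: "\<phi> \<in> F P Q"
  shows "F_conj G F P (\<phi> ` P)"
  unfolding F_conj_def
  using P F_image_subgroup[OF fs P Q \<phi>] fusion_system_onto_image[OF fs P Q \<phi>]
    fusion_system_inv_into[OF fs P Q \<phi>] by blast

lemma F_conj_refl:
  assumes fs: "fusion_system G F" and P: "subgroup P G"
  shows "F_conj G F P P"
proof -
  have "restrict id P \<in> F P P"
    using fusion_system_HomS[OF fs P P] HomS_inclusion[OF subset_refl subgroup.subset[OF P]] by blast
  from F_conj_image[OF fs P P this] show ?thesis by simp
qed

lemma F_conj_trans:
  assumes fs: "fusion_system G F" and "F_conj G F P P1" "F_conj G F P1 P2"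
  shows "F_conj G F P P2"
proof -
  obtain \<phi> where P: "subgroup P G" and P1: "subgroup P1 G" and \<phi>: "\<phi> \<in> F P P1" "\<phi> ` P = P1"
    using assms(2) unfolding F_conj_def by blast
  obtain \<psi> where P2: "subgroup P2 G" and \<psi>: "\<psi> \<in> F P1 P2" "\<psi> ` P1 = P2"
    using assms(3) unfolding F_conj_def by blast
  have "restrict (\<psi> \<circ> \<phi>) P ` P = P2" using \<phi>(2) \<psi>(2) by (auto simp: image_comp[symmetric])
  with F_conj_image[OF fs P P2 fusion_system_comp[OF fs P P1 P2 \<phi>(1) \<psi>(1)]] show ?thesis by simp
qed

lemma exists_fully_centralized_F_conj:
  assumes fs: "fusion_system G F" and fin: "finite (carrier G)" and P: "subgroup P G"
  obtains P' where "F_conj G F P P'" "fully_centralized G F P'"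
proof -
  let ?C = "{P'. F_conj G F P P'}"
  have "?C \<subseteq> Pow (carrier G)" unfolding F_conj_def using subgroup.subset by blast
  then have fC: "finite ?C" using fin finite_subset by blast
  let ?c = "\<lambda>Q. card (centralizerS G Q)"
  have "P \<in> ?C" using F_conj_refl[OF fs P] by simp
  then have "Max (?c ` ?C) \<in> ?c ` ?C" using fC by (intro Max_in) auto
  then obtain P' where P': "P' \<in> ?C" "?c P' = Max (?c ` ?C)" by auto
  then have max: "\<forall>P''\<in>?C. ?c P'' \<le> ?c P'" using fC by simp
  have "fully_centralized G F P'"
    unfolding fully_centralized_def using F_conj_trans[OF fs] P'(1) max by blast
  then show ?thesis using that P'(1) by blast
qed

lemma normalizer_iff:
  assumes "P \<subseteq> carrier G"
  shows "g \<in> normalizer G P \<longleftrightarrow> g \<in> carrier G \<and> (\<lambda>x. g \<otimes> x \<otimes> inv g) ` P = P"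
proof -
  have "g <# P #> inv g = (\<lambda>x. g \<otimes> x \<otimes> inv g) ` P"
    unfolding l_coset_def r_coset_def by auto
  then show ?thesis
    using assms unfolding normalizer_def stabilizer_def by auto
qed

lemma normalizer_conj:
  assumes "subgroup P G" "g \<in> normalizer G P" "x \<in> P"
  shows "g \<otimes> x \<otimes> inv g \<in> P"
  using assms normalizer_iff[OF subgroup.subset[OF assms(1)]] by blast

lemma set_mult_central_subset_normalizer:
  assumes P: "subgroup P G" and Z: "V \<subseteq> centerS G (carrier G)"
  shows "P <#> V \<subseteq> normalizer G P"
proof
  fix g assume "g \<in> P <#> V"
  then obtain x v where x: "x \<in> P" and v: "v \<in> V" and g: "g = x \<otimes> v"
    unfolding set_mult_def by blast
  have xc: "x \<in> carrier G" and vz: "v \<in> centerS G (carrier G)" and vc: "v \<in> carrier G"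
    using x v P Z subgroup.subset by (auto simp: centerS_def)
  have "x \<in> normalizer G P"
    using subgroup.subset[OF normal_imp_subgroup[OF subgroup_in_normalizer[OF P]]] x by auto
  then have "(\<lambda>y. x \<otimes> y \<otimes> inv x) ` P = P" using normalizer_iff[OF subgroup.subset[OF P]] by blast
  moreover have "(\<lambda>y. g \<otimes> y \<otimes> inv g) ` P = (\<lambda>y. x \<otimes> y \<otimes> inv x) ` P"
    unfolding g using centerS_conj_mult[OF vz xc] subgroup.subset[OF P] by (intro image_cong refl) blast
  ultimately have "(\<lambda>y. g \<otimes> y \<otimes> inv g) ` P = P" by simp
  moreover have "g \<in> carrier G" using g xc vc by simp
  ultimately show "g \<in> normalizer G P" using normalizer_iff[OF subgroup.subset[OF P]] by blast
qed

lemma N_phi_iff: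
  assumes P: "subgroup P G" and inj: "inj_on \<phi> P"
  shows "g \<in> N_phi G F P \<phi> \<longleftrightarrow> g \<in> normalizer G P \<and>
     (\<exists>h\<in>carrier G. \<forall>x\<in>P. \<phi> (g \<otimes> x \<otimes> inv g) = h \<otimes> \<phi> x \<otimes> inv h)"
proof -
  have restrict_eq:
    "restrict (\<phi> \<circ> conjm G g \<circ> inv_into P \<phi>) (\<phi> ` P) = restrict (conjm G h) (\<phi> ` P)
      \<longleftrightarrow> (\<forall>x\<in>P. \<phi> (g \<otimes> x \<otimes> inv g) = h \<otimes> \<phi> x \<otimes> inv h)" for h
  proof -
    have "restrict (\<phi> \<circ> conjm G g \<circ> inv_into P \<phi>) (\<phi> ` P) = restrict (conjm G h) (\<phi> ` P)
      \<longleftrightarrow> (\<forall>y\<in>\<phi> ` P. (\<phi> \<circ> conjm G g \<circ> inv_into P \<phi>) y = conjm G h y)"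
      by (rule restrict_eq_restrict_iff)
    also have "\<dots> \<longleftrightarrow> (\<forall>x\<in>P. \<phi> (g \<otimes> x \<otimes> inv g) = h \<otimes> \<phi> x \<otimes> inv h)"
      unfolding Ball_image_comp using inj by (simp add: conjm_def)
    finally show ?thesis .
  qed
  have closed: "conjm G h ` \<phi> ` P \<subseteq> \<phi> ` P"
    if "g \<in> normalizer G P" "\<forall>x\<in>P. \<phi> (g \<otimes> x \<otimes> inv g) = h \<otimes> \<phi> x \<otimes> inv h" for h
  proof
    fix y assume "y \<in> conjm G h ` \<phi> ` P"
    then obtain x where x: "x \<in> P" and "y = h \<otimes> \<phi> x \<otimes> inv h" by (auto simp: conjm_def)
    then have "y = \<phi> (g \<otimes> x \<otimes> inv g)" using that(2) by simp
    then show "y \<in> \<phi> ` P" using normalizer_conj[OF P that(1) x] by blast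
  qed
  show ?thesis
    unfolding N_phi_def HomS_def mem_Collect_eq restrict_eq using closed by blast
qed

lemma N_phi_subgroup:
  assumes fs: "fusion_system G F" and P: "subgroup P G" and Q: "subgroup Q G" and \<phi>: "\<phi> \<in> F P Q"
  shows "subgroup (N_phi G F P \<phi>) G"
proof -
  have NS: "subgroup (normalizer G P) G" using normalizer_imp_subgroup subgroup.subset[OF P] by blast
  have NC: "normalizer G P \<subseteq> carrier G" using subgroup.subset[OF NS] .
  have PC: "P \<subseteq> carrier G" using subgroup.subset[OF P] .
  have \<phi>C: "\<phi> x \<in> carrier G" if "x \<in> P" for x
    using F_InjHomD(2)[OF fs P Q \<phi>] subgroup.subset[OF Q] that by blast
  note N = N_phi_iff[OF P F_InjHomD(3)[OF fs P Q \<phi>]]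
  show ?thesis
  proof (rule subgroupI)
    show "N_phi G F P \<phi> \<subseteq> carrier G" using NC unfolding N_phi_def by blast
    have "\<phi> (\<one> \<otimes> x \<otimes> inv \<one>) = \<one> \<otimes> \<phi> x \<otimes> inv \<one>" if x: "x \<in> P" for x
      using \<phi>C[OF x] x PC by (simp add: subsetD)
    then have "\<one> \<in> N_phi G F P \<phi>"
      unfolding N using subgroup.one_closed[OF NS] one_closed by blast
    then show "N_phi G F P \<phi> \<noteq> {}" by blast
  next
    fix g assume "g \<in> N_phi G F P \<phi>"
    then obtain h where g: "g \<in> normalizer G P" and h: "h \<in> carrier G"
      and gh: "\<And>x. x \<in> P \<Longrightarrow> \<phi> (g \<otimes> x \<otimes> inv g) = h \<otimes> \<phi> x \<otimes> inv h"
      unfolding N by blast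
    have gC: "g \<in> carrier G" using g NC by blast
    have "\<phi> (inv g \<otimes> x \<otimes> inv (inv g)) = inv h \<otimes> \<phi> x \<otimes> inv (inv h)" if x: "x \<in> P" for x
    proof -
      let ?y = "inv g \<otimes> x \<otimes> g"
      have y: "?y \<in> P" using normalizer_conj[OF P subgroup.m_inv_closed[OF NS g] x] gC by simp
      have "g \<otimes> ?y \<otimes> inv g = x" using conj_inv_conj[OF gC] x PC by blast
      then have "\<phi> x = h \<otimes> \<phi> ?y \<otimes> inv h" using gh[OF y] by simp
      then have "\<phi> ?y = inv h \<otimes> \<phi> x \<otimes> inv (inv h)"
        using conj_inv_conj[OF inv_closed[OF h] \<phi>C[OF y]] h by simp
      then show ?thesis using gC by simp
    qed
    then show "inv g \<in> N_phi G F P \<phi>"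
      unfolding N using subgroup.m_inv_closed[OF NS g] inv_closed[OF h] by blast
  next
    fix g1 g2 assume "g1 \<in> N_phi G F P \<phi>" "g2 \<in> N_phi G F P \<phi>"
    then obtain h1 h2 where g: "g1 \<in> normalizer G P" "g2 \<in> normalizer G P"
      and h: "h1 \<in> carrier G" "h2 \<in> carrier G"
      and gh1: "\<And>x. x \<in> P \<Longrightarrow> \<phi> (g1 \<otimes> x \<otimes> inv g1) = h1 \<otimes> \<phi> x \<otimes> inv h1"
      and gh2: "\<And>x. x \<in> P \<Longrightarrow> \<phi> (g2 \<otimes> x \<otimes> inv g2) = h2 \<otimes> \<phi> x \<otimes> inv h2"
      unfolding N by meson
    have "\<phi> ((g1 \<otimes> g2) \<otimes> x \<otimes> inv (g1 \<otimes> g2)) = (h1 \<otimes> h2) \<otimes> \<phi> x \<otimes> inv (h1 \<otimes> h2)"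
      if x: "x \<in> P" for x
    proof -
      have "g1 \<in> carrier G" "g2 \<in> carrier G" "x \<in> carrier G" using g NC x PC by blast+
      then have "\<phi> ((g1 \<otimes> g2) \<otimes> x \<otimes> inv (g1 \<otimes> g2)) = \<phi> (g1 \<otimes> (g2 \<otimes> x \<otimes> inv g2) \<otimes> inv g1)"
        by (simp only: conj_mult)
      also have "\<dots> = h1 \<otimes> (h2 \<otimes> \<phi> x \<otimes> inv h2) \<otimes> inv h1"
        using gh1[OF normalizer_conj[OF P g(2) x]] gh2[OF x] by simp
      also have "\<dots> = (h1 \<otimes> h2) \<otimes> \<phi> x \<otimes> inv (h1 \<otimes> h2)"
        using conj_mult h \<phi>C[OF x] by simp
      finally show ?thesis .
    qed
    then show "g1 \<otimes> g2 \<in> N_phi G F P \<phi>"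
      unfolding N using subgroup.m_closed[OF NS g] m_closed[OF h] by blast
  qed
qed

lemma set_mult_central_subset_N_phi:
  assumes fs: "fusion_system G F" and P: "subgroup P G" and Q: "subgroup Q G" and \<phi>: "\<phi> \<in> F P Q"
    and Z: "V \<subseteq> centerS G (carrier G)"
  shows "P <#> V \<subseteq> N_phi G F P \<phi>"
proof
  fix g assume gPV: "g \<in> P <#> V"
  then obtain x v where x: "x \<in> P" and v: "v \<in> V" and g: "g = x \<otimes> v"
    unfolding set_mult_def by blast
  have xC: "x \<in> carrier G" using x subgroup.subset[OF P] by blast
  have "\<phi> (g \<otimes> y \<otimes> inv g) = \<phi> x \<otimes> \<phi> y \<otimes> inv (\<phi> x)" if y: "y \<in> P" for y
  proof -
    have "v \<in> centerS G (carrier G)" "y \<in> carrier G" using v Z y subgroup.subset[OF P] by blast+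
    then have "g \<otimes> y \<otimes> inv g = (x \<otimes> y) \<otimes> inv x" using centerS_conj_mult xC g by simp
    moreover have "x \<otimes> y \<in> P" "inv x \<in> P"
      using subgroup.m_closed[OF P x y] subgroup.m_inv_closed[OF P x] .
    ultimately show ?thesis
      using F_mult[OF fs P Q \<phi>] F_inv[OF fs P Q \<phi> x] x y by simp
  qed
  moreover have "\<phi> x \<in> carrier G"
    using F_InjHomD(2)[OF fs P Q \<phi>] subgroup.subset[OF Q] x by blast
  ultimately show "g \<in> N_phi G F P \<phi>"
    unfolding N_phi_iff[OF P F_InjHomD(3)[OF fs P Q \<phi>]]
    using set_mult_central_subset_normalizer[OF P Z] gPV by blast
qed

lemma F_weakly_closed_fully_normalized:
  "F_weakly_closed G F V \<Longrightarrow> fully_normalized G F V"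
  unfolding F_weakly_closed_def fully_normalized_def by auto

lemma weakly_closed_central_Aut_F_trivial:
  assumes sat: "saturated_fusion_system p G F" and Z: "V \<subseteq> centerS G (carrier G)"
    and wc: "F_weakly_closed G F V" and pg: "\<exists>n. card (F V V) = p ^ n"
  shows "F V V = {restrict id V}"
proof -
  have V: "subgroup V G" using wc unfolding F_weakly_closed_def by simp
  have "sylow_subset p (HomS G V V) (F V V)"
    using saturated_fusion_systemD(4)[OF sat V F_weakly_closed_fully_normalized[OF wc]] .
  then have "\<not> p dvd card (F V V)" using HomS_central[OF Z] unfolding sylow_subset_def by simp
  then have "card (F V V) = 1" using pg by (metis dvd_power gr0I power_0)
  moreover have "restrict id V \<in> F V V"
    using fusion_system_HomS[OF saturated_fusion_systemD(3)[OF sat] V V] HomS_central[OF Z] by blast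
  ultimately show ?thesis by (metis card_1_singletonE singletonD)
qed

lemma F_fixes_weakly_closed:
  assumes fs: "fusion_system G F" and wc: "F_weakly_closed G F V" and triv: "F V V = {restrict id V}"
    and R: "subgroup R G" and VR: "V \<subseteq> R" and \<psi>: "\<psi> \<in> F R (carrier G)" and v: "v \<in> V"
  shows "\<psi> v = v"
proof -
  have V: "subgroup V G" using wc unfolding F_weakly_closed_def by simp
  have CG: "subgroup (carrier G) G" by (rule subgroup_self)
  have \<chi>: "restrict \<psi> V \<in> F V (carrier G)" using F_restrict[OF fs R V CG VR \<psi>] .
  have "restrict \<psi> V ` V = V"
    using F_conj_image[OF fs V CG \<chi>] wc unfolding F_weakly_closed_def by blast
  then have "restrict \<psi> V \<in> F V V" using F_corestrict[OF fs V V CG \<chi>] by blast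
  then have "restrict \<psi> V = restrict id V" using triv by simp
  then show ?thesis using v by (metis id_apply restrict_apply')
qed

lemma image_extension_fixing_central:
  assumes fs: "fusion_system G F" and P: "subgroup P G" and V: "subgroup V G"
    and Z: "V \<subseteq> centerS G (carrier G)" and R: "subgroup R G" and \<psi>: "\<psi> \<in> F (P <#> V) R"
    and on_P: "\<And>x. x \<in> P \<Longrightarrow> \<psi> x = \<chi> x" and on_V: "\<And>v. v \<in> V \<Longrightarrow> \<psi> v = v"
  shows "\<psi> ` (P <#> V) = \<chi> ` P <#> V"
proof -
  note PV = set_mult_central_subgroup[OF P V Z]
  have "\<psi> (x \<otimes> v) = \<chi> x \<otimes> v" if "x \<in> P" "v \<in> V" for x v
  proof -
    have "\<psi> (x \<otimes> v) = \<psi> x \<otimes> \<psi> v" using F_mult[OF fs PV(1) R \<psi>] PV(2,3) that by blast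
    then show ?thesis using on_P on_V that by simp
  qed
  then show ?thesis unfolding set_mult_def by (auto simp: image_UN)
qed

lemma extension_fixing_central:
  assumes sat: "saturated_fusion_system p G F" and V: "subgroup V G" and Z: "V \<subseteq> centerS G (carrier G)"
    and wc: "F_weakly_closed G F V" and triv: "F V V = {restrict id V}"
    and P: "subgroup P G" and R: "subgroup R G" and \<chi>: "\<chi> \<in> F P R"
    and fc: "fully_centralized G F (\<chi> ` P)"
  obtains \<psi> where "\<psi> \<in> F (P <#> V) (carrier G)" "\<psi> ` (P <#> V) = \<chi> ` P <#> V"
    "\<And>x. x \<in> P \<Longrightarrow> \<psi> x = \<chi> x" "\<And>v. v \<in> V \<Longrightarrow> \<psi> v = v"
proof -
  have fs: "fusion_system G F" using saturated_fusion_systemD(3)[OF sat] .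
  have CG: "subgroup (carrier G) G" by (rule subgroup_self)
  have \<chi>C: "\<chi> \<in> F P (carrier G)"
    using F_corestrict[OF fs P CG R \<chi>] F_InjHomD(2)[OF fs P R \<chi>] subgroup.subset[OF R] by blast
  obtain \<psi> where \<psi>: "\<psi> \<in> F (N_phi G F P \<chi>) (carrier G)" and ext: "\<forall>x\<in>P. \<psi> x = \<chi> x"
    using saturated_fusion_systemD(5)[OF sat P \<chi>C fc] by blast
  have N: "subgroup (N_phi G F P \<chi>) G" using N_phi_subgroup[OF fs P CG \<chi>C] .
  have PV_N: "P <#> V \<subseteq> N_phi G F P \<chi>" using set_mult_central_subset_N_phi[OF fs P CG \<chi>C Z] .
  note PV = set_mult_central_subgroup[OF P V Z]
  have \<psi>': "restrict \<psi> (P <#> V) \<in> F (P <#> V) (carrier G)" using F_restrict[OF fs N PV(1) CG PV_N \<psi>] .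
  have on_P: "restrict \<psi> (P <#> V) x = \<chi> x" if "x \<in> P" for x using ext PV(2) that by auto
  have on_V: "restrict \<psi> (P <#> V) v = v" if "v \<in> V" for v
    using F_fixes_weakly_closed[OF fs wc triv N _ \<psi> that] PV(3) PV_N that by auto
  show ?thesis
    using that[OF \<psi>' image_extension_fixing_central[OF fs P V Z CG \<psi>' on_P on_V] on_P on_V] .
qed

lemma F_subset_CF:
  assumes sat: "saturated_fusion_system p G F" and V: "subgroup V G" and Z: "V \<subseteq> centerS G (carrier G)"
    and wc: "F_weakly_closed G F V" and triv: "F V V = {restrict id V}"
    and P: "subgroup P G" and Q: "subgroup Q G" and \<phi>: "\<phi> \<in> F P Q"
  shows "\<phi> \<in> CF G F V P Q"
proof -
  have fs: "fusion_system G F" using saturated_fusion_systemD(3)[OF sat] .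
  have CG: "subgroup (carrier G) G" by (rule subgroup_self)
  note extend = extension_fixing_central[OF sat V Z wc triv]
  obtain P' where "F_conj G F P P'" and fc: "fully_centralized G F P'"
    using exists_fully_centralized_F_conj[OF fs saturated_fusion_systemD(2)[OF sat] P] .
  then obtain \<alpha> where P': "subgroup P' G" and \<alpha>: "\<alpha> \<in> F P P'" "\<alpha> ` P = P'"
    unfolding F_conj_def by blast
  have \<phi>P: "subgroup (\<phi> ` P) G" using F_image_subgroup[OF fs P Q \<phi>] .
  have inj: "inj_on \<phi> P" using F_InjHomD(3)[OF fs P Q \<phi>] .
  define \<beta> where "\<beta> = restrict (\<alpha> \<circ> inv_into P \<phi>) (\<phi> ` P)"
  have \<beta>: "\<beta> \<in> F (\<phi> ` P) P'"
    unfolding \<beta>_def using fusion_system_comp[OF fs \<phi>P P P' fusion_system_inv_into[OF fs P Q \<phi>] \<alpha>(1)]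
    by (simp add: restrict_compose_right)
  have \<beta>\<phi>: "\<beta> (\<phi> x) = \<alpha> x" if "x \<in> P" for x using inj that by (simp add: \<beta>_def)
  have "\<beta> ` \<phi> ` P = P'" using \<alpha>(2) \<beta>\<phi> by (simp add: image_comp)
  obtain \<psi>a where \<psi>a: "\<psi>a \<in> F (P <#> V) (carrier G)" "\<psi>a ` (P <#> V) = P' <#> V"
      "\<And>x. x \<in> P \<Longrightarrow> \<psi>a x = \<alpha> x" "\<And>v. v \<in> V \<Longrightarrow> \<psi>a v = v"
    using extend[OF P P' \<alpha>(1)] fc \<alpha>(2) by blast
  obtain \<psi>b where \<psi>b: "\<psi>b \<in> F (\<phi> ` P <#> V) (carrier G)" "\<psi>b ` (\<phi> ` P <#> V) = P' <#> V"
      "\<And>y. y \<in> \<phi> ` P \<Longrightarrow> \<psi>b y = \<beta> y" "\<And>v. v \<in> V \<Longrightarrow> \<psi>b v = v"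
    using extend[OF \<phi>P P' \<beta>] fc \<open>\<beta> ` \<phi> ` P = P'\<close> by blast
  note PV = set_mult_central_subgroup[OF P V Z] and \<phi>PV = set_mult_central_subgroup[OF \<phi>P V Z]
  define \<psi> where "\<psi> = restrict (inv_into (\<phi> ` P <#> V) \<psi>b \<circ> \<psi>a) (P <#> V)"
  have \<psi>: "\<psi> \<in> F (P <#> V) (\<phi> ` P <#> V)"
    unfolding \<psi>_def using F_factor_through[OF fs PV(1) \<phi>PV(1) CG \<psi>a(1) \<psi>b(1)] \<psi>a(2) \<psi>b(2) by simp
  have \<psi>b_inv: "inv_into (\<phi> ` P <#> V) \<psi>b (\<psi>b y) = y" if "y \<in> \<phi> ` P <#> V" for y
    using inv_into_f_f[OF F_InjHomD(3)[OF fs \<phi>PV(1) CG \<psi>b(1)] that] .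
  have on_P: "\<psi> x = \<phi> x" if x: "x \<in> P" for x
  proof -
    have "\<psi>a x = \<psi>b (\<phi> x)" using \<psi>a(3)[OF x] \<psi>b(3)[of "\<phi> x"] \<beta>\<phi>[OF x] x by simp
    then show ?thesis using \<psi>b_inv[of "\<phi> x"] \<phi>PV(2) PV(2) x by (simp add: \<psi>_def subset_iff)
  qed
  have on_V: "\<psi> v = v" if v: "v \<in> V" for v
    using \<psi>a(4)[OF v] \<psi>b(4)[OF v] \<psi>b_inv[of v] \<phi>PV(3) PV(3) v by (simp add: \<psi>_def subset_iff)
  have "\<phi> ` P <#> V \<subseteq> Q <#> V" using F_InjHomD(2)[OF fs P Q \<phi>] by (rule mono_set_mult) simp
  then have "\<psi> \<in> F (P <#> V) (Q <#> V)"
    using F_corestrict[OF fs PV(1) set_mult_central_subgroup(1)[OF Q V Z] \<phi>PV(1) \<psi>]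
      F_InjHomD(2)[OF fs PV(1) \<phi>PV(1) \<psi>] by blast
  then show ?thesis unfolding CF_def using \<phi> on_P on_V by blast
qed

end

lemma centric_linking_system_proj:
  "centric_linking_system S F L \<Longrightarrow> F_centric S F P \<Longrightarrow> F_centric S F Q \<Longrightarrow>
    f \<in> Mor L P Q \<Longrightarrow> proj L P Q f \<in> F P Q"
  unfolding centric_linking_system_def Let_def by blast

theorem proposition5p2:
  fixes p :: nat and S :: "('a, 'b) monoid_scheme"
    and F :: "'a set \<Rightarrow> 'a set \<Rightarrow> ('a \<Rightarrow> 'a) set"
    and L :: "('a, 'm) linking" and V :: "'a set"
  assumes "p_local_finite_group p S F L"
    and "subgroup V S" and "V \<subseteq> centerS S (carrier S)"
    and "F_weakly_closed S F V"
    and "\<exists>n. card (F V V) = p ^ n"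
  shows "centralizerS S V = carrier S
    \<and> (\<forall>P Q. subgroup P S \<longrightarrow> subgroup Q S \<longrightarrow> CF S F V P Q = F P Q)
    \<and> (\<forall>P Q. F_centric S F P \<longrightarrow> F_centric S F Q \<longrightarrow> CL_Mor S F L V P Q = Mor L P Q)"
proof -
  have sat: "saturated_fusion_system p S F" and cls: "centric_linking_system S F L"
    using assms(1) unfolding p_local_finite_group_def by simp_all
  interpret group S using saturated_fusion_systemD(1)[OF sat] .
  have triv: "F V V = {restrict id V}"
    using weakly_closed_central_Aut_F_trivial[OF sat assms(3,4,5)] .
  have "centralizerS S V = carrier S"
    using assms(3) unfolding centralizerS_def centerS_def by auto
  moreover have CF: "CF S F V P Q = F P Q" if "subgroup P S" "subgroup Q S" for P Q
    using F_subset_CF[OF sat assms(2,3,4) triv that] unfolding CF_def by blast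
  moreover have "CL_Mor S F L V P Q = Mor L P Q" if "F_centric S F P" "F_centric S F Q" for P Q
    using centric_linking_system_proj[OF cls that] CF that
    unfolding CL_Mor_def F_centric_def by blast
  ultimately show ?thesis by blast
qed

end
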